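(* Let $\Lambda$ satisfy (RC). For $\ell\in\Lambda$ and $n\in\mathbb N$ let $$\mathscr B_n(\ell):=\{(\ell_1,\ell_2)\in\Lambda\times\Lambda:\ n-1<|\ell_1-\ell_2|\le n,\ \ell\in\mathscr P(\ell_1,\ell_2)\}.$$ The nearest-neighbour paths $\mathscr P(\ell_1,\ell_2)$ (paths $\ell_1=k_1,k_2,\dots,k_{N+1}=\ell_2$ in $\Lambda$ with $k_{i+1}\in\mathcal N(k_i)$ and $N\le C|\ell_1-\ell_2|$) may be chosen such that there is $C>0$ with $|\mathscr B_n(\ell)|\le Cn^d$ for all $\ell\in\Lambda$ and all $n\in\mathbb N$.
   Context: Let $d\in\{2,3\}$; $B_R$ is the open ball of radius $R$ at $0$. $A\in\mathbb R^{d\times d}$ nonsingular, $\Lambda^{\rm h}:=A\mathbb Z^d$, with $A$ chosen so that $\ell\pm Ae_i$ are Voronoi neighbours of $\ell$ in $\Lambda^{\rm h}$. A set $\Lambda\subset\mathbb R^d$ satisfies (RC) if there is $R_{\rm def}>0$ with $\Lambda\setminus B_{R_{\rm def}}=\Lambda^{\rm h}\setminus B_{R_{\rm def}}$ and $\Lambda\cap B_{R_{\rm def}}$ finite. For $\ell\in\Lambda$, $\mathcal N(\ell)$ is the set of $m\in\Lambda\setminus\{\ell\}$ for which there exists $a\in\mathbb R^d$ with $|a-\ell|=|a-m|\le|a-k|$ for all $k\in\Lambda$. $|X|$ denotes the cardinality of a finite set $X$; "$\ell\in\mathscr P(\ell_1,\ell_2)$" means $\ell$ is one of the points of the path. *)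

theory Defs
  imports "HOL-Analysis.Analysis"
begin

definition hom_lattice :: "real^'n^'n \<Rightarrow> (real^'n) set" where
  "hom_lattice A = {A *v z | z. \<forall>i. z $ i \<in> \<int>}"

definition RC :: "(real^'n) set \<Rightarrow> real^'n^'n \<Rightarrow> bool" where
  "RC \<Lambda> A \<longleftrightarrow> (\<exists>R>0. \<Lambda> - ball 0 R = hom_lattice A - ball 0 R \<and> finite (\<Lambda> \<inter> ball 0 R))"

definition vor_nbrs :: "(real^'n) set \<Rightarrow> real^'n \<Rightarrow> (real^'n) set" where
  "vor_nbrs \<Lambda> l = {m \<in> \<Lambda> - {l}. \<exists>a. dist a l = dist a m \<and> (\<forall>k\<in>\<Lambda>. dist a l \<le> dist a k)}"

definition nn_path :: "(real^'n) set \<Rightarrow> real \<Rightarrow> real^'n \<Rightarrow> real^'n \<Rightarrow> (real^'n) list \<Rightarrow> bool" where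
  "nn_path \<Lambda> C l1 l2 p \<longleftrightarrow> p \<noteq> [] \<and> hd p = l1 \<and> last p = l2 \<and> set p \<subseteq> \<Lambda> \<and>
     (\<forall>i. Suc i < length p \<longrightarrow> p ! Suc i \<in> vor_nbrs \<Lambda> (p ! i)) \<and>
     real (length p - 1) \<le> C * dist l1 l2"

definition Bn :: "(real^'n) set \<Rightarrow> (real^'n \<Rightarrow> real^'n \<Rightarrow> (real^'n) list) \<Rightarrow> real^'n \<Rightarrow> nat \<Rightarrow> ((real^'n) \<times> (real^'n)) set" where
  "Bn \<Lambda> P l n = {(l1, l2) \<in> \<Lambda> \<times> \<Lambda>. real n - 1 < dist l1 l2 \<and> dist l1 l2 \<le> real n \<and> l \<in> set (P l1 l2)}"

end

theory Submission
  imports Defs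
begin

text \<open>Away from the defect core \<open>\<Lambda>\<close> is the lattice \<open>A \<int>\<^sup>d\<close>, and translating the standard
  lattice walk from \<open>0\<close> to \<open>\<ell>\<^sub>2 - \<ell>\<^sub>1\<close> (steps \<open>\<plusminus>A e\<^sub>i\<close>, length \<open>O(|\<ell>\<^sub>1 - \<ell>\<^sub>2|)\<close>) to start at \<open>\<ell>\<^sub>1\<close>
  gives a nearest-neighbour path whenever the translate stays away from the core. For such
  pairs, \<open>\<ell>\<close> lies on the path iff \<open>\<ell>\<^sub>1 = \<ell> - y\<close> for a vertex \<open>y\<close> of the walk, so there are
  \<open>O(n\<^sup>d\<^sup>-\<^sup>1)\<close> lattice vectors \<open>\<ell>\<^sub>2 - \<ell>\<^sub>1\<close> in the shell times \<open>O(n)\<close> choices of \<open>y\<close>.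
  The remaining pairs (an endpoint near the core, or a translated walk passing near it)
  number \<open>O(n\<^sup>d)\<close> independently of \<open>\<ell>\<close>; for them any path of linear length will do, and
  such paths exist by greedily moving to a Voronoi neighbour closer to the target.
  All counting reduces to a volume packing bound for uniformly separated points. The
  argument works in every dimension.\<close>

section \<open>Packing bounds\<close>

lemma card_mult_measure_ball_le:
  fixes P :: "'a::euclidean_space set"
  assumes fin: "finite P" and e: "e > 0"
    and sep: "\<And>p q. p \<in> P \<Longrightarrow> q \<in> P \<Longrightarrow> p \<noteq> q \<Longrightarrow> 2 * e \<le> dist p q"
    and sub: "\<And>p. p \<in> P \<Longrightarrow> ball p e \<subseteq> V" and V: "V \<in> fmeasurable lborel"
  shows "real (card P) * measure lborel (ball (0::'a) e) \<le> measure lborel V"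
proof -
  have disj: "disjoint_family_on (\<lambda>p. ball p e) P"
    unfolding disjoint_family_on_def
  proof (intro ballI impI)
    fix p q assume "p \<in> P" "q \<in> P" "p \<noteq> q"
    then have "2 * e \<le> dist p q" using sep by auto
    then show "ball p e \<inter> ball q e = {}"
      by (auto simp: ball_def) (metis dist_commute dist_triangle less_le_not_le add_strict_mono mult_2 order.trans)
  qed
  have "real (card P) * measure lborel (ball (0::'a) e) = (\<Sum>p\<in>P. measure lborel (ball p e))"
    using e by (simp add: content_ball)
  also have "\<dots> = measure lborel (\<Union>p\<in>P. ball p e)"
    by (rule measure_finite_Union[OF fin, symmetric]) (use disj emeasure_lborel_ball_finite in \<open>auto simp: less_top\<close>)
  also have "\<dots> \<le> measure lborel V"
    using fin sub V by (intro measure_mono_fmeasurable) auto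
  finally show ?thesis .
qed

lemma card_separated_in_annulus:
  fixes P :: "'a::euclidean_space set"
  assumes e: "e > 0"
    and sep: "\<And>p q. p \<in> P \<Longrightarrow> q \<in> P \<Longrightarrow> p \<noteq> q \<Longrightarrow> 2 * e \<le> dist p q"
    and ab: "a \<le> b" "0 \<le> b"
    and sub: "\<And>p. p \<in> P \<Longrightarrow> a < dist c p \<and> dist c p \<le> b"
  shows "finite P \<and> real (card P) * e ^ DIM('a) \<le> (b + e) ^ DIM('a) - (max 0 (a - e)) ^ DIM('a)"
proof -
  define a' where "a' = max 0 (a - e)"
  define V where "V = cball c (b + e) - ball c a'"
  define w where "w = unit_ball_vol DIM('a)"
  have w: "w > 0" by (simp add: w_def)
  have a': "0 \<le> a'" "a' \<le> b + e" using ab e by (auto simp: a'_def)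
  have V: "V \<in> fmeasurable lborel"
    unfolding V_def by (intro fmeasurable_Diff fmeasurableI) (use emeasure_lborel_cball_finite[of c "b + e"] in auto)
  have measure_V: "measure lborel V = w * ((b + e) ^ DIM('a) - a' ^ DIM('a))"
  proof -
    have "measure lborel V = measure lborel (cball c (b + e)) - measure lborel (ball c a')"
      unfolding V_def
      by (rule measure_Diff) (use a' emeasure_lborel_cball_finite[of c "b + e"] in \<open>auto simp: less_top\<close>)
    then show ?thesis using a' e ab by (simp add: content_ball content_cball w_def algebra_simps)
  qed
  have ball_sub: "ball p e \<subseteq> V" if "p \<in> P" for p
  proof
    fix x assume "x \<in> ball p e"
    then have "dist p x < e" by auto
    moreover have "dist c x \<le> dist c p + dist p x" "dist c p \<le> dist c x + dist p x"
      using dist_triangle[of c x p] dist_triangle[of c p x] by (simp_all add: dist_commute)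
    ultimately have "dist c x \<le> b + e" "a - e \<le> dist c x" using sub[OF that] by linarith+
    then show "x \<in> V" by (simp add: V_def a'_def not_less)
  qed
  have bound: "real (card G) * e ^ DIM('a) \<le> (b + e) ^ DIM('a) - a' ^ DIM('a)"
    if "G \<subseteq> P" "finite G" for G
  proof -
    have "real (card G) * measure lborel (ball (0::'a) e) \<le> measure lborel V"
      using that sep ball_sub by (intro card_mult_measure_ball_le[OF _ e _ _ V]) blast+
    then have "w * (real (card G) * e ^ DIM('a)) \<le> w * ((b + e) ^ DIM('a) - a' ^ DIM('a))"
      using e by (simp add: content_ball measure_V w_def algebra_simps)
    then show ?thesis using w by simp
  qed
  have "finite P \<and> card P \<le> nat \<lceil>((b + e) ^ DIM('a) - a' ^ DIM('a)) / e ^ DIM('a)\<rceil>"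
  proof (rule finite_if_finite_subsets_card_bdd)
    fix G assume "G \<subseteq> P" "finite G"
    then have "real (card G) \<le> ((b + e) ^ DIM('a) - a' ^ DIM('a)) / e ^ DIM('a)"
      using bound e by (simp add: pos_le_divide_eq)
    then show "card G \<le> nat \<lceil>((b + e) ^ DIM('a) - a' ^ DIM('a)) / e ^ DIM('a)\<rceil>"
      by linarith
  qed
  then show ?thesis using bound[of P] by (simp add: a'_def)
qed

lemma power_diff_le_mult:
  fixes x y :: real
  assumes "0 \<le> y" "y \<le> x"
  shows "x ^ k - y ^ k \<le> real k * (x - y) * x ^ (k - 1)"
proof (induction k)
  case (Suc k)
  have "y ^ k \<le> x ^ k" using assms by (simp add: power_mono)
  have "x ^ Suc k - y ^ Suc k = x * (x ^ k - y ^ k) + (x - y) * y ^ k" by (simp add: algebra_simps)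
  also have "\<dots> \<le> x * (real k * (x - y) * x ^ (k - 1)) + (x - y) * x ^ k"
    using Suc assms \<open>y ^ k \<le> x ^ k\<close> by (intro add_mono mult_left_mono) auto
  also have "\<dots> = real (Suc k) * (x - y) * x ^ k"
    by (cases k) (simp_all add: algebra_simps)
  finally show ?case by simp
qed simp

lemma annulus_power_diff_le:
  fixes r e :: real and d :: nat
  assumes r: "1 \<le> r" and e: "0 < e" and d: "1 \<le> d"
  shows "(r + e) ^ d - (max 0 (r - 1 - e)) ^ d \<le> real d * (1 + 2 * e) * (1 + e) ^ (d - 1) * r ^ (d - 1)"
proof -
  have "(r + e) ^ (d - 1) \<le> ((1 + e) * r) ^ (d - 1)"
    using r e by (intro power_mono) (auto simp: algebra_simps)
  then have pw: "(r + e) ^ (d - 1) \<le> (1 + e) ^ (d - 1) * r ^ (d - 1)"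
    by (simp add: power_mult_distrib)
  have "(r + e) ^ d - (max 0 (r - 1 - e)) ^ d \<le> real d * (1 + 2 * e) * (r + e) ^ (d - 1)"
  proof (cases "r - 1 - e \<le> 0")
    case True
    have "(r + e) ^ d = (r + e) * (r + e) ^ (d - 1)" using d power_minus_mult[of d "r + e"] by (simp add: mult.commute)
    also have "\<dots> \<le> real d * (1 + 2 * e) * (r + e) ^ (d - 1)"
      using True d r e by (intro mult_right_mono) (auto intro: order.trans[of _ "1 + 2 * e"])
    finally show ?thesis using True d by (simp add: power_0_left)
  next
    case False
    then show ?thesis using power_diff_le_mult[of "r - 1 - e" "r + e" d] e by (simp add: add.commute)
  qed
  also have "\<dots> \<le> real d * (1 + 2 * e) * ((1 + e) ^ (d - 1) * r ^ (d - 1))"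
    using pw e by (intro mult_left_mono) auto
  finally show ?thesis by (simp add: mult.assoc)
qed

section \<open>The lattice \<open>A \<int>\<^sup>d\<close>\<close>

definition int_vecs :: "(real^'n) set" where
  "int_vecs = {z. \<forall>i. z $ i \<in> \<int>}"

lemma norm_ge_1_if_int_vec:
  assumes "z \<in> int_vecs" "z \<noteq> 0"
  shows "1 \<le> norm z"
proof -
  obtain i where "z $ i \<noteq> 0" using assms(2) by (metis vec_eq_iff zero_index)
  moreover obtain k where "z $ i = of_int k" using assms(1) by (auto simp: int_vecs_def elim: Ints_cases)
  ultimately have "1 \<le> \<bar>z $ i\<bar>" by auto
  then show ?thesis using component_le_norm_cart[of z i] by linarith
qed

lemma hom_lattice_eq_image: "hom_lattice A = (\<lambda>z. A *v z) ` int_vecs"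
  by (auto simp: hom_lattice_def int_vecs_def)

lemma hom_lattice_add:
  assumes "x \<in> hom_lattice A" "y \<in> hom_lattice A"
  shows "x + y \<in> hom_lattice A"
proof -
  obtain zx zy where "x = A *v zx" "y = A *v zy" "\<forall>i. zx $ i \<in> \<int>" "\<forall>i. zy $ i \<in> \<int>"
    using assms by (auto simp: hom_lattice_def)
  then show ?thesis
    by (auto simp: hom_lattice_def matrix_vector_right_distrib intro!: exI[of _ "zx + zy"])
qed

lemma hom_lattice_diff:
  assumes "x \<in> hom_lattice A" "y \<in> hom_lattice A"
  shows "x - y \<in> hom_lattice A"
proof -
  obtain zx zy where "x = A *v zx" "y = A *v zy" "\<forall>i. zx $ i \<in> \<int>" "\<forall>i. zy $ i \<in> \<int>"
    using assms by (auto simp: hom_lattice_def)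
  then show ?thesis
    by (auto simp: hom_lattice_def matrix_vector_mult_diff_distrib intro!: exI[of _ "zx - zy"])
qed

lemma norm_matrix_vector_le:
  "norm (A *v u) \<le> (\<Sum>i\<in>UNIV. \<bar>u $ i\<bar> * norm (A *v axis i (1::real)))"
proof -
  have "A *v u = A *v (\<Sum>i\<in>UNIV. u $ i *\<^sub>R axis i 1)"
    using basis_expansion[of u] by (simp add: scalar_mult_eq_scaleR)
  also have "\<dots> = (\<Sum>i\<in>UNIV. u $ i *\<^sub>R (A *v axis i 1))"
    by (simp add: linear_sum[OF matrix_vector_mul_linear] matrix_vector_mult_scaleR)
  finally have "norm (A *v u) = norm (\<Sum>i\<in>UNIV. u $ i *\<^sub>R (A *v axis i 1))" by simp
  also have "\<dots> \<le> (\<Sum>i\<in>UNIV. norm (u $ i *\<^sub>R (A *v axis i 1)))" by (rule norm_sum)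
  finally show ?thesis by simp
qed

locale invertible_lattice =
  fixes A :: "real^'n^'n"
  assumes invertible: "invertible A"
begin

abbreviation L :: "(real^'n) set" where "L \<equiv> hom_lattice A"

definition cover_radius :: real where
  "cover_radius = (\<Sum>i\<in>UNIV. norm (A *v axis i 1))"

text \<open>The summand \<open>1\<close> in \<open>inv_bound\<close> only makes it positive.\<close>

definition inv_bound :: real where
  "inv_bound = onorm ((*v) (matrix_inv A)) + 1"

definition pack_radius :: real where
  "pack_radius = 1 / (2 * inv_bound)"

definition shell_const :: real where
  "shell_const = real CARD('n) * (1 + 2 * pack_radius) * (1 + pack_radius) ^ (CARD('n) - 1)
                   / pack_radius ^ CARD('n)"

lemma cover_radius_nonneg: "0 \<le> cover_radius"
  by (simp add: cover_radius_def sum_nonneg)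

lemma norm_axis_le_cover_radius: "norm (A *v axis i 1) \<le> cover_radius"
  unfolding cover_radius_def by (rule member_le_sum) auto

lemma matrix_inv_mult: "matrix_inv A ** A = mat 1" "A ** matrix_inv A = mat 1"
  using someI_ex[OF invertible[unfolded invertible_def]] by (auto simp: matrix_inv_def)

lemma inv_bound_pos: "inv_bound > 0"
  using onorm_pos_le[OF matrix_vector_mul_bounded_linear, of "matrix_inv A"]
  unfolding inv_bound_def by linarith

lemma norm_le_inv_bound: "norm x \<le> inv_bound * norm (A *v x)"
proof -
  have "norm x = norm (matrix_inv A *v (A *v x))"
    by (simp add: matrix_vector_mul_assoc matrix_inv_mult)
  also have "\<dots> \<le> onorm ((*v) (matrix_inv A)) * norm (A *v x)"
    by (rule onorm[OF matrix_vector_mul_bounded_linear])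
  also have "\<dots> \<le> inv_bound * norm (A *v x)"
    by (simp add: inv_bound_def algebra_simps)
  finally show ?thesis .
qed

lemma pack_radius_pos: "pack_radius > 0"
  using inv_bound_pos by (simp add: pack_radius_def)

lemma shell_const_pos: "shell_const > 0"
  using pack_radius_pos by (simp add: shell_const_def)

lemma lattice_dist_ge:
  assumes "x \<in> L" "y \<in> L" "x \<noteq> y"
  shows "2 * pack_radius \<le> dist x y"
proof -
  obtain zx zy where z: "zx \<in> int_vecs" "zy \<in> int_vecs" "x = A *v zx" "y = A *v zy"
    using assms by (auto simp: hom_lattice_eq_image)
  then have "zx - zy \<in> int_vecs" "zx - zy \<noteq> 0" using assms by (auto simp: int_vecs_def)
  then have "1 \<le> norm (zx - zy)" by (rule norm_ge_1_if_int_vec)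
  also have "\<dots> \<le> inv_bound * dist x y"
    using norm_le_inv_bound[of "zx - zy"] z by (simp add: dist_norm matrix_vector_mult_diff_distrib)
  finally show ?thesis
    using inv_bound_pos by (simp add: pack_radius_def field_simps)
qed

lemma lattice_covering: "\<exists>y\<in>L. dist x y \<le> cover_radius"
proof -
  define w where "w = matrix_inv A *v x"
  define z :: "real^'n" where "z = (\<chi> i. of_int \<lfloor>w $ i\<rfloor>)"
  have "x - A *v z = A *v (w - z)"
    by (simp add: w_def matrix_vector_mul_assoc matrix_inv_mult matrix_vector_mult_diff_distrib)
  then have "norm (x - A *v z) \<le> (\<Sum>i\<in>UNIV. \<bar>(w - z) $ i\<bar> * norm (A *v axis i (1::real)))"
    by (metis norm_matrix_vector_le)
  also have "\<dots> \<le> cover_radius" unfolding cover_radius_def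
  proof (rule sum_mono)
    fix i
    have "\<bar>(w - z) $ i\<bar> \<le> 1" by (simp add: z_def) linarith
    then show "\<bar>(w - z) $ i\<bar> * norm (A *v axis i (1::real)) \<le> norm (A *v axis i (1::real))"
      by (simp add: mult_left_le_one_le)
  qed
  finally show ?thesis
    by (intro bexI[of _ "A *v z"]) (auto simp: hom_lattice_def z_def dist_norm)
qed

lemma lattice_annulus_card:
  assumes "a \<le> b" "0 \<le> b"
  shows "finite {x\<in>L. a < dist c x \<and> dist c x \<le> b} \<and>
    real (card {x\<in>L. a < dist c x \<and> dist c x \<le> b}) * pack_radius ^ CARD('n)
      \<le> (b + pack_radius) ^ CARD('n) - (max 0 (a - pack_radius)) ^ CARD('n)"
proof -
  have "finite {x\<in>L. a < dist c x \<and> dist c x \<le> b} \<and>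
    real (card {x\<in>L. a < dist c x \<and> dist c x \<le> b}) * pack_radius ^ DIM(real^'n)
      \<le> (b + pack_radius) ^ DIM(real^'n) - (max 0 (a - pack_radius)) ^ DIM(real^'n)"
    by (rule card_separated_in_annulus[OF pack_radius_pos _ assms]) (auto intro: lattice_dist_ge)
  then show ?thesis by simp
qed

lemma lattice_shell_card:
  assumes r: "1 \<le> r"
  shows "finite {x\<in>L. r - 1 < dist c x \<and> dist c x \<le> r} \<and>
    real (card {x\<in>L. r - 1 < dist c x \<and> dist c x \<le> r}) \<le> shell_const * r ^ (CARD('n) - 1)"
proof -
  let ?S = "{x\<in>L. r - 1 < dist c x \<and> dist c x \<le> r}" and ?d = "CARD('n)" and ?\<rho> = pack_radius
  have fin: "finite ?S" using lattice_annulus_card[of "r - 1" r c] r by simp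
  have "real (card ?S) * ?\<rho> ^ ?d \<le> (r + ?\<rho>) ^ ?d - (max 0 (r - 1 - ?\<rho>)) ^ ?d"
    using lattice_annulus_card[of "r - 1" r c] r by simp
  also have "\<dots> \<le> real ?d * (1 + 2 * ?\<rho>) * (1 + ?\<rho>) ^ (?d - 1) * r ^ (?d - 1)"
    by (rule annulus_power_diff_le[OF r pack_radius_pos]) (simp add: Suc_le_eq)
  also have "\<dots> = shell_const * r ^ (?d - 1) * ?\<rho> ^ ?d"
    using pack_radius_pos by (simp add: shell_const_def)
  finally have "real (card ?S) * ?\<rho> ^ ?d \<le> shell_const * r ^ (?d - 1) * ?\<rho> ^ ?d" .
  then show ?thesis
    using fin pack_radius_pos by simp
qed

lemma lattice_cball_card:
  assumes r: "0 \<le> r"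
  shows "finite {x\<in>L. dist c x \<le> r} \<and>
    real (card {x\<in>L. dist c x \<le> r}) \<le> ((r + pack_radius) / pack_radius) ^ CARD('n)"
proof -
  have "{x\<in>L. dist c x \<le> r} = {x\<in>L. - 1 < dist c x \<and> dist c x \<le> r}"
    by (auto intro: less_le_trans[OF _ zero_le_dist])
  moreover have "max 0 (- 1 - pack_radius) = 0"
    using pack_radius_pos by simp
  ultimately have "finite {x\<in>L. dist c x \<le> r}"
    and "real (card {x\<in>L. dist c x \<le> r}) * pack_radius ^ CARD('n) \<le> (r + pack_radius) ^ CARD('n)"
    using lattice_annulus_card[of "- 1" r c] r by (simp_all add: power_0_left)
  then show ?thesis
    using pack_radius_pos by (simp add: pos_le_divide_eq power_divide)
qed


definition basis_step :: "real^'n \<Rightarrow> real^'n \<Rightarrow> bool" where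
  "basis_step y y' \<longleftrightarrow> (\<exists>i. y' = y + A *v axis i 1 \<or> y' = y - A *v axis i 1)"

lemma basis_walk_to_int_vec:
  assumes "z \<in> int_vecs" "(\<Sum>i\<in>UNIV. \<bar>z $ i\<bar>) = real N"
  shows "\<exists>ys. hd ys = 0 \<and> last ys = A *v z \<and> set ys \<subseteq> L \<and> successively basis_step ys \<and>
             length ys = N + 1"
  using assms
proof (induction N arbitrary: z)
  case 0
  then have "\<forall>i\<in>UNIV. \<bar>z $ i\<bar> = 0" by (subst sum_nonneg_eq_0_iff[symmetric]) auto
  then have "z = 0" by (simp add: vec_eq_iff)
  moreover have "0 \<in> L" by (auto simp: hom_lattice_def intro!: exI[of _ 0])
  ultimately show ?case by (intro exI[of _ "[0]"]) simp
next
  case (Suc N)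
  then have "z \<noteq> 0" by auto
  then obtain i where zi: "z $ i \<noteq> 0" by (metis vec_eq_iff zero_index)
  define \<sigma> :: real where "\<sigma> = sgn (z $ i)"
  have \<sigma>: "\<sigma> = 1 \<or> \<sigma> = -1" using zi by (simp add: \<sigma>_def sgn_real_def)
  define z' where "z' = z - \<sigma> *\<^sub>R axis i 1"
  have z': "z' \<in> int_vecs" using Suc.prems(1) \<sigma> by (auto simp: z'_def int_vecs_def axis_def)
  obtain k where "z $ i = of_int k" using Suc.prems(1) by (auto simp: int_vecs_def elim: Ints_cases)
  then have "1 \<le> \<bar>z $ i\<bar>" using zi by auto
  then have "\<bar>z' $ j\<bar> = \<bar>z $ j\<bar> - (if j = i then 1 else 0)" for j
    using \<sigma> by (auto simp: z'_def \<sigma>_def sgn_real_def axis_def)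
  then have "(\<Sum>j\<in>UNIV. \<bar>z' $ j\<bar>) = real N" using Suc.prems(2) by (simp add: sum_subtractf)
  then obtain ys where ys: "hd ys = 0" "last ys = A *v z'" "set ys \<subseteq> L" "successively basis_step ys"
    "length ys = N + 1"
    using Suc.IH[OF z'] by blast
  have "A *v z = A *v z' + \<sigma> *\<^sub>R (A *v axis i 1)"
    by (simp add: z'_def matrix_vector_mult_diff_distrib matrix_vector_mult_scaleR)
  then have "basis_step (last ys) (A *v z)"
    using \<sigma> ys(2) unfolding basis_step_def by (auto intro!: exI[of _ i])
  moreover have "A *v z \<in> L" using Suc.prems(1) by (auto simp: hom_lattice_eq_image)
  moreover have "ys \<noteq> []" using ys(5) by auto
  ultimately show ?case
    using ys by (intro exI[of _ "ys @ [A *v z]"]) (auto simp: successively_append_iff)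
qed

lemma basis_walk_exists:
  assumes "v \<in> L"
  shows "\<exists>ys. ys \<noteq> [] \<and> hd ys = 0 \<and> last ys = v \<and> set ys \<subseteq> L \<and> successively basis_step ys \<and>
             real (length ys - 1) \<le> real CARD('n) * inv_bound * norm v"
proof -
  obtain z where z: "z \<in> int_vecs" "v = A *v z" using assms by (auto simp: hom_lattice_eq_image)
  have "(\<Sum>i\<in>UNIV. \<bar>z $ i\<bar>) \<in> \<int>" using z(1) unfolding int_vecs_def by (intro Ints_sum) auto
  then obtain m where m: "(\<Sum>i\<in>UNIV. \<bar>z $ i\<bar>) = of_int m" by (auto elim: Ints_cases)
  have "0 \<le> (\<Sum>i\<in>UNIV. \<bar>z $ i\<bar>)" by (simp add: sum_nonneg)
  then have N: "(\<Sum>i\<in>UNIV. \<bar>z $ i\<bar>) = real (nat m)" using m by simp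
  then obtain ys where ys: "hd ys = 0" "last ys = v" "set ys \<subseteq> L" "successively basis_step ys"
    "length ys = nat m + 1"
    using basis_walk_to_int_vec[OF z(1)] z(2) by blast
  have "real (nat m) \<le> (\<Sum>i\<in>(UNIV::'n set). norm z)"
    unfolding N[symmetric] by (intro sum_mono component_le_norm_cart)
  also have "\<dots> \<le> real CARD('n) * (inv_bound * norm v)"
    using norm_le_inv_bound[of z] z(2) by (simp add: mult_left_mono)
  finally have "real (length ys - 1) \<le> real CARD('n) * inv_bound * norm v"
    using ys(5) by (simp add: mult.assoc)
  moreover have "ys \<noteq> []" using ys(5) by auto
  ultimately show ?thesis using ys by blast
qed

definition std_walk :: "real^'n \<Rightarrow> (real^'n) list" where
  "std_walk v = (SOME ys. ys \<noteq> [] \<and> hd ys = 0 \<and> last ys = v \<and> set ys \<subseteq> L \<and>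
     successively basis_step ys \<and> real (length ys - 1) \<le> real CARD('n) * inv_bound * norm v)"

lemma std_walk:
  assumes "v \<in> L"
  shows "std_walk v \<noteq> [] \<and> hd (std_walk v) = 0 \<and> last (std_walk v) = v \<and> set (std_walk v) \<subseteq> L \<and>
    successively basis_step (std_walk v) \<and>
    real (length (std_walk v) - 1) \<le> real CARD('n) * inv_bound * norm v"
  unfolding std_walk_def by (rule someI_ex[OF basis_walk_exists[OF assms]])

end

section \<open>Paths through Voronoi neighbours\<close>

definition vor_path :: "(real^'n) set \<Rightarrow> (real^'n) list \<Rightarrow> bool" where
  "vor_path S p \<longleftrightarrow> p \<noteq> [] \<and> set p \<subseteq> S \<and> successively (\<lambda>k m. m \<in> vor_nbrs S k) p"

lemma nn_path_iff_vor_path: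
  "nn_path S C l1 l2 p \<longleftrightarrow>
     vor_path S p \<and> hd p = l1 \<and> last p = l2 \<and> real (length p - 1) \<le> C * dist l1 l2"
  by (auto simp: nn_path_def vor_path_def successively_conv_nth)

lemma vor_path_singleton: "x \<in> S \<Longrightarrow> vor_path S [x]"
  by (simp add: vor_path_def)

lemma vor_path_Cons: "l \<in> S \<Longrightarrow> vor_path S p \<Longrightarrow> hd p \<in> vor_nbrs S l \<Longrightarrow> vor_path S (l # p)"
  by (auto simp: vor_path_def successively_Cons)

lemma vor_path_append:
  assumes p: "vor_path S p" and q: "vor_path S q" and pq: "last p = hd q"
  shows "vor_path S (p @ tl q) \<and> hd (p @ tl q) = hd p \<and> last (p @ tl q) = last q \<and>
         length (p @ tl q) - 1 = (length p - 1) + (length q - 1)"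
proof (cases "tl q")
  case Nil
  then have "q = [last p]" using q pq by (cases q) (auto simp: vor_path_def)
  then show ?thesis using p Nil by (auto simp: vor_path_def)
next
  case (Cons y r)
  then have "q = hd q # y # r" using q by (cases q) (auto simp: vor_path_def)
  then have "successively (\<lambda>k m. m \<in> vor_nbrs S k) (y # r)" "y \<in> vor_nbrs S (last p)"
    using q pq unfolding vor_path_def by (metis successively.simps(3))+
  moreover have "set (y # r) \<subseteq> S"
    using q \<open>q = hd q # y # r\<close> unfolding vor_path_def by (metis set_subset_Cons subset_trans)
  moreover have "last (p @ y # r) = last q" using \<open>q = hd q # y # r\<close> by (metis last_ConsR last_appendR list.distinct(1))
  moreover have "length (p @ tl q) - 1 = (length p - 1) + (length q - 1)"
    using p q by (cases p; cases q) (auto simp: vor_path_def)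
  ultimately show ?thesis
    using p q Cons by (auto simp: vor_path_def successively_append_iff)
qed

text \<open>Minimising \<open>\<parallel>k - \<ell>\<parallel>\<^sup>2 / (2 u \<bullet> (k - \<ell>))\<close>, \<open>u = t - \<ell>\<close>, over the points of \<open>S\<close> in the closed ball
  with diameter \<open>[\<ell>, t]\<close> gives a minimiser \<open>m\<close> and a parameter \<open>s\<close> such that \<open>\<ell> + s u\<close> is
  equidistant from \<open>\<ell>\<close> and \<open>m\<close> and no closer to any other point of \<open>S\<close>.\<close>

lemma exists_vor_nbr_closer:
  fixes S :: "(real^'n) set"
  assumes fin: "finite (S \<inter> cball t (dist l t))" and l: "l \<in> S" and t: "t \<in> S" and lt: "l \<noteq> t"
  shows "\<exists>m\<in>vor_nbrs S l. dist m t < dist l t"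
proof -
  define u where "u = t - l"
  define F where "F = {k\<in>S. 0 < u \<bullet> (k - l) \<and> (norm (k - l))\<^sup>2 \<le> u \<bullet> (k - l)}"
  have dist_t: "(dist k t)\<^sup>2 = (norm (k - l))\<^sup>2 - 2 * (u \<bullet> (k - l)) + (norm u)\<^sup>2" for k
    unfolding u_def dist_norm power2_norm_eq_inner
    by (simp add: inner_diff_left inner_diff_right inner_commute algebra_simps)
  have F_closer: "dist k t < dist l t" if "k \<in> F" for k
  proof -
    have "(dist k t)\<^sup>2 < (dist l t)\<^sup>2"
      using that dist_t[of k] by (auto simp: F_def u_def dist_norm norm_minus_commute)
    then show ?thesis by (simp add: power2_less_imp_less)
  qed
  then have "F \<subseteq> S \<inter> cball t (dist l t)" by (auto simp: F_def dist_commute less_imp_le)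
  then have fF: "finite F" using fin finite_subset by blast
  have uu: "0 < u \<bullet> u" using lt by (simp add: u_def)
  have tF: "t \<in> F" using t uu by (simp add: F_def u_def power2_norm_eq_inner)
  define s where "s k = (norm (k - l))\<^sup>2 / (2 * (u \<bullet> (k - l)))" for k
  obtain m where mF: "m \<in> F" and m_min: "\<And>k. k \<in> F \<Longrightarrow> s m \<le> s k"
    using fF tF by (metis (no_types) empty_iff arg_min_if_finite(1,2) not_less)
  have um: "0 < u \<bullet> (m - l)" using mF by (simp add: F_def)
  have "s m \<le> 1 / 2" using m_min[OF tF] uu by (simp add: s_def u_def power2_norm_eq_inner)
  moreover have "0 \<le> s m" using um by (simp add: s_def)
  moreover define a where "a = l + s m *\<^sub>R u"
  have dist_a: "(dist a k)\<^sup>2 - (dist a l)\<^sup>2 = (norm (k - l))\<^sup>2 - 2 * s m * (u \<bullet> (k - l))" for k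
    unfolding a_def dist_norm power2_norm_eq_inner
    by (simp add: inner_add_left inner_add_right inner_diff_left inner_diff_right inner_commute algebra_simps power2_eq_square)
  have "dist a l = dist a m"
  proof -
    have "2 * s m * (u \<bullet> (m - l)) = (norm (m - l))\<^sup>2" using um by (simp add: s_def)
    then show ?thesis using dist_a[of m] by (simp add: power2_eq_iff_nonneg)
  qed
  moreover have "dist a l \<le> dist a k" if k: "k \<in> S" for k
  proof -
    have "2 * s m * (u \<bullet> (k - l)) \<le> (norm (k - l))\<^sup>2"
    proof (cases "0 < u \<bullet> (k - l)")
      case False
      then show ?thesis using \<open>0 \<le> s m\<close> by (smt (verit) mult_nonneg_nonpos zero_le_power2)
    next
      case True
      show ?thesis
      proof (cases "k \<in> F")
        case True
        then have "2 * s m * (u \<bullet> (k - l)) \<le> 2 * s k * (u \<bullet> (k - l))"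
          using m_min \<open>0 < u \<bullet> (k - l)\<close> by simp
        then show ?thesis using \<open>0 < u \<bullet> (k - l)\<close> by (simp add: s_def)
      next
        case False
        then have "u \<bullet> (k - l) < (norm (k - l))\<^sup>2" using k \<open>0 < u \<bullet> (k - l)\<close> by (auto simp: F_def)
        moreover have "2 * s m * (u \<bullet> (k - l)) \<le> 1 * (u \<bullet> (k - l))"
          using \<open>s m \<le> 1 / 2\<close> \<open>0 < u \<bullet> (k - l)\<close> by (intro mult_right_mono) auto
        ultimately show ?thesis by simp
      qed
    qed
    then have "(dist a l)\<^sup>2 \<le> (dist a k)\<^sup>2" using dist_a[of k] by linarith
    then show ?thesis by (rule power2_le_imp_le) simp
  qed
  moreover have "m \<in> S" "m \<noteq> l" using mF um by (auto simp: F_def)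
  ultimately have "m \<in> vor_nbrs S l" unfolding vor_nbrs_def by blast
  then show ?thesis using F_closer[OF mF] by blast
qed

lemma vor_path_to_target:
  fixes S :: "(real^'n) set"
  assumes fin: "\<And>r. finite (S \<inter> cball t r)" and t: "t \<in> S"
  shows "l \<in> S \<Longrightarrow> \<exists>p. vor_path S p \<and> hd p = l \<and> last p = t \<and>
                         length p - 1 \<le> card (S \<inter> ball t (dist l t))"
proof (induction "card (S \<inter> ball t (dist l t))" arbitrary: l rule: less_induct)
  case less
  show ?case
  proof (cases "l = t")
    case True
    then show ?thesis using t by (intro exI[of _ "[t]"]) (simp add: vor_path_singleton)
  next
    case False
    obtain m where m: "m \<in> vor_nbrs S l" "dist m t < dist l t"
      using exists_vor_nbr_closer[OF fin less.prems t False] by blast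
    have mS: "m \<in> S" using m(1) by (simp add: vor_nbrs_def)
    have "finite (S \<inter> ball t (dist l t))"
      using fin[of "dist l t"] by (rule finite_subset[rotated]) auto
    moreover have "S \<inter> ball t (dist m t) \<subset> S \<inter> ball t (dist l t)"
    proof
      show "S \<inter> ball t (dist m t) \<subseteq> S \<inter> ball t (dist l t)" using m(2) by auto
      show "S \<inter> ball t (dist m t) \<noteq> S \<inter> ball t (dist l t)"
        using m(2) mS by (metis IntI dist_commute Int_iff mem_ball less_irrefl)
    qed
    ultimately have lt: "card (S \<inter> ball t (dist m t)) < card (S \<inter> ball t (dist l t))"
      by (rule psubset_card_mono)
    obtain q where q: "vor_path S q" "hd q = m" "last q = t" "length q - 1 \<le> card (S \<inter> ball t (dist m t))"
      using less.hyps[OF lt mS] by blast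
    have "vor_path S (l # q)" using vor_path_Cons[OF less.prems q(1)] q(2) m(1) by simp
    moreover have "q \<noteq> []" using q(1) by (simp add: vor_path_def)
    ultimately show ?thesis
      using q lt by (intro exI[of _ "l # q"]) (cases q; auto)
  qed
qed

lemma nn_path_mono:
  assumes "nn_path S C l1 l2 p" "C \<le> C'"
  shows "nn_path S C' l1 l2 p"
proof -
  have "C * dist l1 l2 \<le> C' * dist l1 l2" using assms(2) by (simp add: mult_right_mono)
  then show ?thesis using assms(1) by (auto simp: nn_path_def)
qed

lemma exists_point_on_segment_at_dist:
  fixes a b :: "'a::real_normed_vector"
  assumes "0 \<le> s" "s \<le> dist a b"
  shows "\<exists>x. dist x b = s \<and> dist a x = dist a b - s"
proof -
  define D where "D = dist a b"
  define x where "x = b + (s / D) *\<^sub>R (a - b)"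
  have D: "norm (a - b) = D" by (simp add: D_def dist_norm)
  show ?thesis
  proof (cases "D = 0")
    case True
    then show ?thesis using assms by (intro exI[of _ b]) (simp add: D_def)
  next
    case False
    then have "D > 0" by (simp add: D_def)
    have "dist x b = s" using \<open>D > 0\<close> assms by (simp add: x_def dist_norm D)
    moreover have "a - x = (1 - s / D) *\<^sub>R (a - b)" by (simp add: x_def algebra_simps)
    then have "dist a x = (1 - s / D) * D"
      using \<open>D > 0\<close> assms by (simp add: dist_norm D)
    then have "dist a x = D - s"
      using \<open>D > 0\<close> by (simp add: algebra_simps)
    ultimately show ?thesis by (auto simp: D_def)
  qed
qed

lemma sq_norm_midpoint_identity:
  fixes a l m k :: "'a::real_inner"
  shows "2 * (norm ((1/2) *\<^sub>R (l + m) - k))\<^sup>2 - 2 * (norm ((1/2) *\<^sub>R (l + m) - l))\<^sup>2 =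
     ((norm (a - k))\<^sup>2 - (norm (a - l))\<^sup>2) + ((norm (a - (l + m - k)))\<^sup>2 - (norm (a - m))\<^sup>2)"
  unfolding power2_norm_eq_inner
  by (simp add: inner_add_left inner_add_right inner_diff_left inner_diff_right inner_commute
      algebra_simps power2_eq_square)

lemma midpoint_dist_le_if_witness:
  fixes a l m k :: "'a::real_inner"
  assumes "dist a l \<le> dist a k" "dist a m \<le> dist a (l + m - k)"
  shows "dist ((1/2) *\<^sub>R (l + m)) l \<le> dist ((1/2) *\<^sub>R (l + m)) k"
proof -
  define c where "c = (1/2) *\<^sub>R (l + m)"
  have "(norm (a - l))\<^sup>2 \<le> (norm (a - k))\<^sup>2" "(norm (a - m))\<^sup>2 \<le> (norm (a - (l + m - k)))\<^sup>2"
    using assms by (simp_all add: dist_norm power_mono)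
  moreover have "2 * (norm (c - k))\<^sup>2 - 2 * (norm (c - l))\<^sup>2 =
     ((norm (a - k))\<^sup>2 - (norm (a - l))\<^sup>2) + ((norm (a - (l + m - k)))\<^sup>2 - (norm (a - m))\<^sup>2)"
    unfolding c_def by (rule sq_norm_midpoint_identity)
  ultimately have "(norm (c - l))\<^sup>2 \<le> (norm (c - k))\<^sup>2" by linarith
  then have "norm (c - l) \<le> norm (c - k)" by (rule power2_le_imp_le) simp
  then show ?thesis unfolding c_def dist_norm .
qed
section \<open>Lattices with a finite defect core\<close>

locale defected_lattice = invertible_lattice A for A :: "real^'n^'n" +
  fixes \<Lambda> :: "(real^'n) set" and R :: real
  assumes R_pos: "R > 0"
    and outside_core: "\<Lambda> - ball 0 R = hom_lattice A - ball 0 R"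
    and finite_core: "finite (\<Lambda> \<inter> ball 0 R)"
    and lattice_vor_nbrs: "\<And>l i. l \<in> hom_lattice A \<Longrightarrow>
       l + A *v axis i 1 \<in> vor_nbrs (hom_lattice A) l \<and> l - A *v axis i 1 \<in> vor_nbrs (hom_lattice A) l"
begin

lemma in_defects_if_far: "x \<in> L \<Longrightarrow> R \<le> norm x \<Longrightarrow> x \<in> \<Lambda>"
  using outside_core by (metis DiffD1 DiffI dist_0_norm mem_ball not_less)

lemma in_lattice_if_far: "x \<in> \<Lambda> \<Longrightarrow> R \<le> norm x \<Longrightarrow> x \<in> L"
  using outside_core by (metis DiffD1 DiffI dist_0_norm mem_ball not_less)

definition core_card :: nat where
  "core_card = card (\<Lambda> \<inter> ball 0 R)"

definition cball_bound :: "real \<Rightarrow> real" where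
  "cball_bound r = real core_card + ((r + pack_radius) / pack_radius) ^ CARD('n)"

lemma cball_bound_nonneg: "0 \<le> r \<Longrightarrow> 0 \<le> cball_bound r"
  using pack_radius_pos by (simp add: cball_bound_def)

lemma cball_bound_mono: "0 \<le> r \<Longrightarrow> r \<le> r' \<Longrightarrow> cball_bound r \<le> cball_bound r'"
  unfolding cball_bound_def using pack_radius_pos
  by (intro add_left_mono power_mono divide_right_mono) auto

lemma defects_card_le:
  assumes "finite {x\<in>L. P x}"
  shows "finite {x\<in>\<Lambda>. P x} \<and> card {x\<in>\<Lambda>. P x} \<le> core_card + card {x\<in>L. P x}"
proof -
  have sub: "{x\<in>\<Lambda>. P x} \<subseteq> (\<Lambda> \<inter> ball 0 R) \<union> {x\<in>L. P x}"
    using in_lattice_if_far by (auto simp: not_less)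
  have fin: "finite ((\<Lambda> \<inter> ball 0 R) \<union> {x\<in>L. P x})" using assms finite_core by simp
  have "card {x\<in>\<Lambda>. P x} \<le> card ((\<Lambda> \<inter> ball 0 R) \<union> {x\<in>L. P x})" by (rule card_mono[OF fin sub])
  also have "\<dots> \<le> core_card + card {x\<in>L. P x}" unfolding core_card_def by (rule card_Un_le)
  finally show ?thesis using finite_subset[OF sub fin] by simp
qed

lemma defects_cball_card:
  assumes "0 \<le> r"
  shows "finite (\<Lambda> \<inter> cball c r) \<and> real (card (\<Lambda> \<inter> cball c r)) \<le> cball_bound r"
proof -
  have "\<Lambda> \<inter> cball c r = {x\<in>\<Lambda>. dist c x \<le> r}" by auto
  then show ?thesis
    using defects_card_le[of "\<lambda>x. dist c x \<le> r"] lattice_cball_card[OF assms, of c]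
    by (auto simp: cball_bound_def)
qed

lemma defects_shell_card:
  assumes "1 \<le> r"
  shows "finite {x\<in>\<Lambda>. r - 1 < dist c x \<and> dist c x \<le> r} \<and>
    real (card {x\<in>\<Lambda>. r - 1 < dist c x \<and> dist c x \<le> r}) \<le> real core_card + shell_const * r ^ (CARD('n) - 1)"
  using defects_card_le[of "\<lambda>x. r - 1 < dist c x \<and> dist c x \<le> r"] lattice_shell_card[OF assms, of c]
  by auto

definition dense_radius :: real where
  "dense_radius = 2 * R + 3 * cover_radius"

lemma dense_radius_nonneg: "0 \<le> dense_radius"
  using R_pos cover_radius_nonneg by (simp add: dense_radius_def)

lemma defects_covering: "\<exists>y\<in>\<Lambda>. dist x y \<le> dense_radius"
proof -
  obtain i :: 'n where True by simp
  define x' where "x' = (if R + cover_radius \<le> norm x then x else (R + cover_radius) *\<^sub>R axis i 1)"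
  have "R + cover_radius \<le> norm x'" and "dist x x' \<le> 2 * R + 2 * cover_radius"
    using R_pos cover_radius_nonneg norm_triangle_ineq4[of x x']
    by (auto simp: x'_def dist_norm)
  obtain y where y: "y \<in> L" "dist x' y \<le> cover_radius" using lattice_covering by blast
  have "norm x' \<le> norm y + dist x' y" by (metis dist_norm norm_triangle_sub)
  then have "y \<in> \<Lambda>" using in_defects_if_far[OF y(1)] \<open>R + cover_radius \<le> norm x'\<close> y(2) by linarith
  moreover have "dist x y \<le> dist x x' + dist x' y" by (rule dist_triangle)
  ultimately have "dist x y \<le> dense_radius"
    using \<open>dist x x' \<le> 2 * R + 2 * cover_radius\<close> y(2) by (simp add: dense_radius_def)
  with \<open>y \<in> \<Lambda>\<close> show ?thesis by blast
qed

lemma defects_separated: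
  obtains \<delta> where "\<delta> > 0" "\<And>x y. x \<in> \<Lambda> \<Longrightarrow> y \<in> \<Lambda> \<Longrightarrow> x \<noteq> y \<Longrightarrow> \<delta> \<le> dist x y"
proof -
  define F where "F = \<Lambda> \<inter> cball 0 (R + 1)"
  have fF: "finite F" using defects_cball_card[of "R + 1" 0] R_pos by (simp add: F_def)
  define D where "D = insert 1 ((\<lambda>(p, q). dist p q) ` (F \<times> F - Id))"
  have fD: "finite D" using fF by (simp add: D_def)
  have "Min D \<in> D" using fD by (intro Min_in) (auto simp: D_def)
  then have D_pos: "Min D > 0" by (auto simp: D_def)
  show ?thesis
  proof (rule that[of "min (2 * pack_radius) (Min D)"])
    show "min (2 * pack_radius) (Min D) > 0" using D_pos pack_radius_pos by simp
    fix x y assume xy: "x \<in> \<Lambda>" "y \<in> \<Lambda>" "x \<noteq> y"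
    show "min (2 * pack_radius) (Min D) \<le> dist x y"
    proof (cases "R \<le> norm x \<and> R \<le> norm y")
      case True
      then show ?thesis using in_lattice_if_far xy lattice_dist_ge by (simp add: min.coboundedI1)
    next
      case False
      have "dist x y \<in> D" if "dist x y < 1"
      proof -
        have "norm x \<le> norm y + dist x y" "norm y \<le> norm x + dist x y"
          using norm_triangle_sub[of x y] norm_triangle_sub[of y x] by (simp_all add: dist_norm norm_minus_commute)
        then have "x \<in> F" "y \<in> F" using False that xy by (auto simp: F_def)
        then show ?thesis using xy by (auto simp: D_def)
      qed
      moreover have "1 \<in> D" by (simp add: D_def)
      ultimately have "Min D \<le> dist x y" using fD by (meson Min_le not_less order.trans)
      then show ?thesis by (simp add: min.coboundedI2)
    qed
  qed
qed

lemma vor_path_within_cball_bound: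
  assumes "l \<in> \<Lambda>" "t \<in> \<Lambda>" "dist l t \<le> r"
  shows "\<exists>p. vor_path \<Lambda> p \<and> hd p = l \<and> last p = t \<and> real (length p - 1) \<le> cball_bound r"
proof -
  have r: "0 \<le> r" using assms(3) zero_le_dist order.trans by blast
  have fin: "finite (\<Lambda> \<inter> cball t r')" for r'
    by (cases "0 \<le> r'") (use defects_cball_card in auto)
  obtain p where p: "vor_path \<Lambda> p" "hd p = l" "last p = t" "length p - 1 \<le> card (\<Lambda> \<inter> ball t (dist l t))"
    using vor_path_to_target[OF fin assms(2,1)] by blast
  have "\<Lambda> \<inter> ball t (dist l t) \<subseteq> \<Lambda> \<inter> cball t r" using assms(3) by (auto simp: dist_commute)
  then have "card (\<Lambda> \<inter> ball t (dist l t)) \<le> card (\<Lambda> \<inter> cball t r)"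
    using fin by (intro card_mono) auto
  then have "real (length p - 1) \<le> real (card (\<Lambda> \<inter> cball t r))" using p(4) by linarith
  also have "\<dots> \<le> cball_bound r" using defects_cball_card[OF r, of t] by simp
  finally show ?thesis using p by blast
qed

text \<open>Hop from \<open>\<ell>\<^sub>1\<close> to a point of \<open>\<Lambda>\<close> near the point of \<open>[\<ell>\<^sub>1, \<ell>\<^sub>2]\<close> at distance \<open>k\<close> from \<open>\<ell>\<^sub>2\<close>
  and recurse; every hop costs at most \<open>cball_bound (1 + 2 * dense_radius)\<close>.\<close>

lemma vor_path_length_le_steps:
  "l1 \<in> \<Lambda> \<Longrightarrow> l2 \<in> \<Lambda> \<Longrightarrow> dist l1 l2 \<le> real k + dense_radius \<Longrightarrow>
     \<exists>p. vor_path \<Lambda> p \<and> hd p = l1 \<and> last p = l2 \<and>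
         real (length p - 1) \<le> real (k + 1) * cball_bound (1 + 2 * dense_radius)"
proof (induction k arbitrary: l1)
  case 0
  then obtain p where "vor_path \<Lambda> p" "hd p = l1" "last p = l2" "real (length p - 1) \<le> cball_bound dense_radius"
    using vor_path_within_cball_bound by fastforce
  moreover have "cball_bound dense_radius \<le> cball_bound (1 + 2 * dense_radius)"
    using dense_radius_nonneg by (intro cball_bound_mono) auto
  ultimately show ?case by fastforce
next
  case (Suc k)
  let ?H = "cball_bound (1 + 2 * dense_radius)"
  have H: "0 \<le> ?H" using dense_radius_nonneg by (intro cball_bound_nonneg) auto
  show ?case
  proof (cases "dist l1 l2 \<le> real k + dense_radius")
    case True
    then obtain p where "vor_path \<Lambda> p" "hd p = l1" "last p = l2" "real (length p - 1) \<le> real (k + 1) * ?H"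
      using Suc by blast
    moreover have "real (k + 1) * ?H \<le> real (Suc k + 1) * ?H" using H by (intro mult_right_mono) auto
    ultimately show ?thesis by fastforce
  next
    case False
    then obtain x where x: "dist x l2 = real k" "dist l1 x = dist l1 l2 - real k"
      using exists_point_on_segment_at_dist[of "real k" l1 l2] dense_radius_nonneg by auto
    obtain w where w: "w \<in> \<Lambda>" "dist x w \<le> dense_radius" using defects_covering by blast
    have "dist w l2 \<le> real k + dense_radius"
      using dist_triangle[of w l2 x] x w by (simp add: dist_commute)
    then obtain q where q: "vor_path \<Lambda> q" "hd q = w" "last q = l2" "real (length q - 1) \<le> real (k + 1) * ?H"
      using Suc.IH[OF w(1) Suc.prems(2)] by blast
    have "dist l1 w \<le> 1 + 2 * dense_radius"
      using dist_triangle[of l1 w x] x w Suc.prems(3) by simp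
    then obtain p where p: "vor_path \<Lambda> p" "hd p = l1" "last p = w" "real (length p - 1) \<le> ?H"
      using vor_path_within_cball_bound[OF Suc.prems(1) w(1)] by blast
    have "vor_path \<Lambda> (p @ tl q) \<and> hd (p @ tl q) = l1 \<and> last (p @ tl q) = l2 \<and>
        length (p @ tl q) - 1 = (length p - 1) + (length q - 1)"
      using vor_path_append[OF p(1) q(1)] p q by simp
    moreover have "real (length p - 1) + real (length q - 1) \<le> real (Suc k + 1) * ?H"
      using p(4) q(4) by (simp add: algebra_simps)
    ultimately show ?thesis by (intro exI[of _ "p @ tl q"]) simp
  qed
qed

lemma exists_linear_nn_paths:
  obtains Cp where "Cp > 0" "\<And>l1 l2. l1 \<in> \<Lambda> \<Longrightarrow> l2 \<in> \<Lambda> \<Longrightarrow> \<exists>p. nn_path \<Lambda> Cp l1 l2 p"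
proof -
  obtain \<delta> where \<delta>: "\<delta> > 0" "\<And>x y. x \<in> \<Lambda> \<Longrightarrow> y \<in> \<Lambda> \<Longrightarrow> x \<noteq> y \<Longrightarrow> \<delta> \<le> dist x y"
    using defects_separated by blast
  define H where "H = cball_bound (1 + 2 * dense_radius)"
  have H: "0 \<le> H" unfolding H_def using dense_radius_nonneg by (intro cball_bound_nonneg) auto
  define Cp where "Cp = (1 + 2 / \<delta>) * H + 1"
  show ?thesis
  proof (rule that[of Cp])
    show "Cp > 0" using H \<delta>(1) by (simp add: Cp_def add_nonneg_pos)
    fix l1 l2 assume l: "l1 \<in> \<Lambda>" "l2 \<in> \<Lambda>"
    show "\<exists>p. nn_path \<Lambda> Cp l1 l2 p"
    proof (cases "l1 = l2")
      case True
      then show ?thesis using l by (intro exI[of _ "[l1]"]) (simp add: nn_path_def)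
    next
      case False
      define D where "D = dist l1 l2"
      have D: "\<delta> \<le> D" using \<delta>(2)[OF l False] by (simp add: D_def)
      define k where "k = nat \<lceil>D\<rceil>"
      have k: "D \<le> real k" "real k \<le> D + 1"
        using D \<delta>(1) by (simp_all add: k_def of_nat_nat of_int_ceiling_le_add_one)
      obtain p where p: "vor_path \<Lambda> p" "hd p = l1" "last p = l2" "real (length p - 1) \<le> real (k + 1) * H"
        using vor_path_length_le_steps[OF l, of k] k dense_radius_nonneg unfolding H_def D_def by fastforce
      have "1 \<le> D / \<delta>" using D \<delta>(1) by simp
      then have "real (k + 1) * H \<le> (D + 2 * (D / \<delta>)) * H"
        using k H by (intro mult_right_mono) auto
      also have "\<dots> \<le> Cp * D" using D \<delta>(1) H by (simp add: Cp_def algebra_simps)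
      finally show ?thesis using p by (auto simp: nn_path_iff_vor_path D_def)
    qed
  qed
qed


text \<open>If \<open>a\<close> witnesses \<open>m = \<ell> \<plusminus> A e\<^sub>i \<in> \<N>(\<ell>)\<close> in the lattice, then the reflection \<open>k \<mapsto> \<ell> + m - k\<close>
  preserves the lattice and the midpoint identity makes \<open>(\<ell> + m) / 2\<close> a witness for every
  lattice point; points of the core are too far from the midpoint to interfere.\<close>

lemma far_basis_step_vor_nbr:
  assumes l: "l \<in> L" "R + cover_radius \<le> norm l"
    and e: "e = A *v axis i 1 \<or> e = - (A *v axis i 1)" and m: "R \<le> norm (l + e)"
  shows "l + e \<in> vor_nbrs \<Lambda> l"
proof -
  have "l + e \<in> vor_nbrs L l" using lattice_vor_nbrs[OF l(1), of i] e by auto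
  then obtain a where mL: "l + e \<in> L" "l + e \<noteq> l"
    and a: "dist a l = dist a (l + e)" "\<And>k. k \<in> L \<Longrightarrow> dist a l \<le> dist a k"
    unfolding vor_nbrs_def by blast
  define c where "c = (1/2) *\<^sub>R (l + (l + e))"
  have cl: "c - l = (1/2) *\<^sub>R e" and cm: "c - (l + e) = - ((1/2) *\<^sub>R e)"
    by (simp_all add: c_def vec_eq_iff field_simps)
  have ne: "norm e \<le> cover_radius" using e norm_axis_le_cover_radius[of i] by auto
  have dcl: "dist c l = norm e / 2" by (simp add: dist_norm cl)
  have "dist c l \<le> dist c k" if k: "k \<in> \<Lambda>" for k
  proof (cases "R \<le> norm k")
    case True
    then have kL: "k \<in> L" using in_lattice_if_far k by blast
    then have "l + (l + e) - k \<in> L" using hom_lattice_add[OF l(1) mL(1)] hom_lattice_diff by blast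
    then show ?thesis
      using midpoint_dist_le_if_witness[of a l k "l + e"] a kL by (simp add: c_def)
  next
    case False
    have "norm (l - c) = norm e / 2" using cl by (simp add: norm_minus_commute[of l c])
    then have "norm l \<le> norm c + norm e / 2" using norm_triangle_sub[of l c] by simp
    moreover have "norm c \<le> norm k + dist c k" using norm_triangle_sub[of c k] by (simp add: dist_norm)
    ultimately show ?thesis using False l(2) ne dcl by linarith
  qed
  moreover have "dist c l = dist c (l + e)" by (simp add: dist_norm cl cm)
  moreover have "l + e \<in> \<Lambda>" using in_defects_if_far[OF mL(1) m] .
  ultimately show ?thesis using mL(2) unfolding vor_nbrs_def by blast
qed

definition far_radius :: real where
  "far_radius = R + cover_radius"

lemma far_radius_nonneg: "0 \<le> far_radius"
  using R_pos cover_radius_nonneg by (simp add: far_radius_def)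

definition far_pair :: "real^'n \<Rightarrow> real^'n \<Rightarrow> bool" where
  "far_pair l1 l2 \<longleftrightarrow> l1 \<in> L \<and> l2 \<in> L \<and> (\<forall>y\<in>set (std_walk (l2 - l1)). far_radius \<le> norm (l1 + y))"

lemma nn_path_translated_std_walk:
  assumes "far_pair l1 l2"
  shows "nn_path \<Lambda> (real CARD('n) * inv_bound) l1 l2 (map ((+) l1) (std_walk (l2 - l1)))"
proof -
  define ys where "ys = std_walk (l2 - l1)"
  have l: "l1 \<in> L" "l2 \<in> L" and far: "\<And>y. y \<in> set ys \<Longrightarrow> far_radius \<le> norm (l1 + y)"
    using assms by (auto simp: far_pair_def ys_def)
  have ys: "ys \<noteq> []" "hd ys = 0" "last ys = l2 - l1" "set ys \<subseteq> L" "successively basis_step ys"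
    "real (length ys - 1) \<le> real CARD('n) * inv_bound * norm (l2 - l1)"
    using std_walk[OF hom_lattice_diff[OF l(2,1)]] unfolding ys_def by auto
  have in_L: "l1 + y \<in> L" if "y \<in> set ys" for y using that ys hom_lattice_add[OF l(1)] by auto
  have "set (map ((+) l1) ys) \<subseteq> \<Lambda>"
    using in_L far in_defects_if_far R_pos cover_radius_nonneg by (force simp: far_radius_def)
  moreover have "successively (\<lambda>k m. m \<in> vor_nbrs \<Lambda> k) (map ((+) l1) ys)"
    unfolding successively_map
  proof (rule successively_mono[OF ys(5)])
    fix y y' assume "y \<in> set ys" "y' \<in> set ys" "basis_step y y'"
    then obtain i where "y' = y + A *v axis i 1 \<or> y' = y - A *v axis i 1" by (auto simp: basis_step_def)
    then have "y' - y = A *v axis i 1 \<or> y' - y = - (A *v axis i 1)" by auto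
    moreover have "R \<le> norm (l1 + y + (y' - y))"
      using far[OF \<open>y' \<in> set ys\<close>] cover_radius_nonneg by (simp add: far_radius_def)
    moreover have "R + cover_radius \<le> norm (l1 + y)" using far[OF \<open>y \<in> set ys\<close>] by (simp add: far_radius_def)
    ultimately have "l1 + y + (y' - y) \<in> vor_nbrs \<Lambda> (l1 + y)"
      using far_basis_step_vor_nbr[of "l1 + y" "y' - y" i] in_L[OF \<open>y \<in> set ys\<close>] by blast
    then show "l1 + y' \<in> vor_nbrs \<Lambda> (l1 + y)" by simp
  qed
  ultimately show ?thesis
    using ys unfolding ys_def[symmetric]
    by (simp add: nn_path_iff_vor_path vor_path_def hd_map last_map dist_norm norm_minus_commute)
qed

definition chosen_path :: "real \<Rightarrow> real^'n \<Rightarrow> real^'n \<Rightarrow> (real^'n) list" where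
  "chosen_path Cp l1 l2 =
     (if far_pair l1 l2 then map ((+) l1) (std_walk (l2 - l1)) else (SOME p. nn_path \<Lambda> Cp l1 l2 p))"

lemma nn_path_chosen_path:
  assumes "real CARD('n) * inv_bound \<le> Cp" and "\<exists>p. nn_path \<Lambda> Cp l1 l2 p"
  shows "nn_path \<Lambda> Cp l1 l2 (chosen_path Cp l1 l2)"
proof (cases "far_pair l1 l2")
  case True
  then show ?thesis
    using nn_path_mono[OF nn_path_translated_std_walk assms(1)] by (simp add: chosen_path_def)
next
  case False
  then show ?thesis using someI_ex[OF assms(2)] by (simp add: chosen_path_def)
qed

end

section \<open>Counting the pairs whose path passes through a point\<close>

lemma card_Sigma_le:
  assumes "finite A" "\<And>x. x \<in> A \<Longrightarrow> finite (B x) \<and> real (card (B x)) \<le> c"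
  shows "finite (Sigma A B) \<and> real (card (Sigma A B)) \<le> real (card A) * c"
proof -
  have "real (card (Sigma A B)) = (\<Sum>x\<in>A. real (card (B x)))"
    using assms by (simp add: card_SigmaI)
  also have "\<dots> \<le> (\<Sum>x\<in>A. c)" using assms(2) by (intro sum_mono) auto
  finally show ?thesis using assms by (simp add: mult.commute)
qed

lemma card_Un4_le:
  "card (W \<union> X \<union> Y \<union> Z) \<le> card W + card X + card Y + card Z"
proof -
  have "card (W \<union> X \<union> Y \<union> Z) \<le> card (W \<union> X \<union> Y) + card Z" by (rule card_Un_le)
  also have "\<dots> \<le> card (W \<union> X) + card Y + card Z" using card_Un_le[of "W \<union> X" Y] by simp
  also have "\<dots> \<le> card W + card X + card Y + card Z" using card_Un_le[of W X] by simp
  finally show ?thesis .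
qed

context defected_lattice
begin

definition shell_vecs :: "real \<Rightarrow> (real^'n) set" where
  "shell_vecs r = {v\<in>L. r - 1 < dist 0 v \<and> dist 0 v \<le> r}"

definition near_core_pairs :: "real \<Rightarrow> ((real^'n) \<times> (real^'n)) set" where
  "near_core_pairs r = (SIGMA x:\<Lambda> \<inter> cball 0 far_radius. {y\<in>\<Lambda>. r - 1 < dist x y \<and> dist x y \<le> r})"

definition through_pairs :: "real^'n \<Rightarrow> real \<Rightarrow> ((real^'n) \<times> (real^'n)) set" where
  "through_pairs l r = (\<lambda>(v, y). (l - y, l - y + v)) ` (SIGMA v:shell_vecs r. set (std_walk v))"

definition blocked_pairs :: "real \<Rightarrow> ((real^'n) \<times> (real^'n)) set" where
  "blocked_pairs r = (\<lambda>(v, y, x). (x, x + v)) `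
     (SIGMA v:shell_vecs r. SIGMA y:set (std_walk v). {x\<in>L. dist (- y) x \<le> far_radius})"

lemma Bn_chosen_path_subset:
  "Bn \<Lambda> (chosen_path Cp) l n \<subseteq>
     through_pairs l (real n) \<union> near_core_pairs (real n) \<union> prod.swap ` near_core_pairs (real n) \<union>
     blocked_pairs (real n)"
proof
  fix pr assume "pr \<in> Bn \<Lambda> (chosen_path Cp) l n"
  then obtain l1 l2 where pr: "pr = (l1, l2)" "l1 \<in> \<Lambda>" "l2 \<in> \<Lambda>" "real n - 1 < dist l1 l2"
    "dist l1 l2 \<le> real n" "l \<in> set (chosen_path Cp l1 l2)"
    by (auto simp: Bn_def)
  consider "norm l1 \<le> far_radius" | "norm l2 \<le> far_radius" | "far_radius < norm l1" "far_radius < norm l2"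
    by linarith
  then show "pr \<in> through_pairs l (real n) \<union> near_core_pairs (real n) \<union>
      prod.swap ` near_core_pairs (real n) \<union> blocked_pairs (real n)"
  proof cases
    case 1
    then show ?thesis using pr by (auto simp: near_core_pairs_def)
  next
    case 2
    then have "(l2, l1) \<in> near_core_pairs (real n)" using pr by (auto simp: near_core_pairs_def dist_commute)
    then have "prod.swap (l2, l1) \<in> prod.swap ` near_core_pairs (real n)" by (rule imageI)
    then show ?thesis using pr by simp
  next
    case 3
    then have "R \<le> norm l1" "R \<le> norm l2" using cover_radius_nonneg by (auto simp: far_radius_def)
    then have "l1 \<in> L" "l2 \<in> L" using in_lattice_if_far pr by blast+
    define v where "v = l2 - l1"
    have v: "v \<in> shell_vecs (real n)"
      using hom_lattice_diff[OF \<open>l2 \<in> L\<close> \<open>l1 \<in> L\<close>] pr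
      by (simp add: shell_vecs_def v_def dist_norm norm_minus_commute)
    show ?thesis
    proof (cases "far_pair l1 l2")
      case True
      then obtain y where y: "y \<in> set (std_walk v)" "l = l1 + y"
        using pr(6) by (auto simp: chosen_path_def v_def)
      have "(\<lambda>(v, y). (l - y, l - y + v)) (v, y) \<in> through_pairs l (real n)"
        unfolding through_pairs_def using v y(1) by (intro imageI) simp
      then show ?thesis using pr y(2) by (simp add: v_def)
    next
      case False
      then obtain y where y: "y \<in> set (std_walk v)" "norm (l1 + y) < far_radius"
        using \<open>l1 \<in> L\<close> \<open>l2 \<in> L\<close> by (auto simp: far_pair_def v_def not_le)
      then have "l1 \<in> {x\<in>L. dist (- y) x \<le> far_radius}"
        using \<open>l1 \<in> L\<close> by (simp add: dist_norm add.commute norm_minus_commute)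
      then have "(\<lambda>(v, y, x). (x, x + v)) (v, y, l1) \<in> blocked_pairs (real n)"
        unfolding blocked_pairs_def using v y(1) by (intro imageI) simp
      then show ?thesis using pr by (simp add: v_def)
    qed
  qed
qed

lemma card_std_walk_le:
  assumes "v \<in> shell_vecs r"
  shows "real (card (set (std_walk v))) \<le> real CARD('n) * inv_bound * r + 1"
proof -
  have v: "v \<in> L" "norm v \<le> r" using assms by (auto simp: shell_vecs_def)
  have "real (card (set (std_walk v))) \<le> real (length (std_walk v) - 1) + 1"
    using card_length[of "std_walk v"] by linarith
  also have "\<dots> \<le> real CARD('n) * inv_bound * norm v + 1" using std_walk[OF v(1)] by simp
  also have "\<dots> \<le> real CARD('n) * inv_bound * r + 1"
    using v(2) inv_bound_pos by (intro add_right_mono mult_left_mono) auto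
  finally show ?thesis .
qed

lemma card_shell_vecs:
  "1 \<le> r \<Longrightarrow> finite (shell_vecs r) \<and> real (card (shell_vecs r)) \<le> shell_const * r ^ (CARD('n) - 1)"
  unfolding shell_vecs_def by (rule lattice_shell_card)

lemma card_through_pairs:
  assumes "1 \<le> r"
  shows "finite (through_pairs l r) \<and>
    real (card (through_pairs l r)) \<le> shell_const * r ^ (CARD('n) - 1) * (real CARD('n) * inv_bound * r + 1)"
proof -
  have "finite (SIGMA v:shell_vecs r. set (std_walk v)) \<and>
      real (card (SIGMA v:shell_vecs r. set (std_walk v)))
        \<le> real (card (shell_vecs r)) * (real CARD('n) * inv_bound * r + 1)"
    using card_shell_vecs[OF assms] card_std_walk_le by (intro card_Sigma_le) auto
  moreover have "real (card (shell_vecs r)) * (real CARD('n) * inv_bound * r + 1)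
      \<le> shell_const * r ^ (CARD('n) - 1) * (real CARD('n) * inv_bound * r + 1)"
    using card_shell_vecs[OF assms] assms inv_bound_pos by (intro mult_right_mono) auto
  ultimately show ?thesis
    unfolding through_pairs_def by (meson card_image_le finite_imageI of_nat_le_iff order.trans)
qed

lemma card_near_core_pairs:
  assumes "1 \<le> r"
  shows "finite (near_core_pairs r) \<and> real (card (near_core_pairs r))
           \<le> real (card (\<Lambda> \<inter> cball 0 far_radius)) * (real core_card + shell_const * r ^ (CARD('n) - 1))"
  unfolding near_core_pairs_def
  using defects_cball_card[OF far_radius_nonneg] defects_shell_card[OF assms]
  by (intro card_Sigma_le) auto

lemma card_blocked_pairs:
  assumes "1 \<le> r"
  shows "finite (blocked_pairs r) \<and> real (card (blocked_pairs r))
    \<le> shell_const * r ^ (CARD('n) - 1) * (real CARD('n) * inv_bound * r + 1) *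
        ((far_radius + pack_radius) / pack_radius) ^ CARD('n)"
proof -
  let ?T = "real CARD('n) * inv_bound * r + 1" and ?M = "((far_radius + pack_radius) / pack_radius) ^ CARD('n)"
  have M: "0 \<le> ?M" using pack_radius_pos far_radius_nonneg by simp
  have "finite (SIGMA y:set (std_walk v). {x\<in>L. dist (- y) x \<le> far_radius}) \<and>
      real (card (SIGMA y:set (std_walk v). {x\<in>L. dist (- y) x \<le> far_radius})) \<le> ?T * ?M"
    if "v \<in> shell_vecs r" for v
  proof -
    have "finite (SIGMA y:set (std_walk v). {x\<in>L. dist (- y) x \<le> far_radius}) \<and>
      real (card (SIGMA y:set (std_walk v). {x\<in>L. dist (- y) x \<le> far_radius}))
        \<le> real (card (set (std_walk v))) * ?M"
      using lattice_cball_card[OF far_radius_nonneg] by (intro card_Sigma_le) auto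
    then show ?thesis using card_std_walk_le[OF that] M by (meson mult_right_mono order.trans)
  qed
  then have "finite (SIGMA v:shell_vecs r. SIGMA y:set (std_walk v). {x\<in>L. dist (- y) x \<le> far_radius}) \<and>
      real (card (SIGMA v:shell_vecs r. SIGMA y:set (std_walk v). {x\<in>L. dist (- y) x \<le> far_radius}))
        \<le> real (card (shell_vecs r)) * (?T * ?M)"
    using card_shell_vecs[OF assms] by (intro card_Sigma_le) auto
  moreover have "real (card (shell_vecs r)) * (?T * ?M) \<le> shell_const * r ^ (CARD('n) - 1) * ?T * ?M"
  proof -
    have "0 \<le> ?T * ?M" using inv_bound_pos assms M by simp
    then show ?thesis
      using mult_right_mono[OF conjunct2[OF card_shell_vecs[OF assms]]] by (simp add: mult.assoc)
  qed
  ultimately show ?thesis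
    unfolding blocked_pairs_def by (meson card_image_le finite_imageI of_nat_le_iff order.trans)
qed

lemma card_Bn_chosen_path_le:
  obtains C where "C > 0" "\<And>l n. 1 \<le> n \<Longrightarrow> finite (Bn \<Lambda> (chosen_path Cp) l n) \<and>
    real (card (Bn \<Lambda> (chosen_path Cp) l n)) \<le> C * real n ^ CARD('n)"
proof -
  let ?d = "CARD('n)" and ?K = "shell_const" and ?c = "real CARD('n) * inv_bound"
  let ?N = "real (card (\<Lambda> \<inter> cball 0 far_radius))"
    and ?M = "((far_radius + pack_radius) / pack_radius) ^ CARD('n)"
  define C0 where "C0 = ?K * (?c + 1) * (1 + ?M) + 2 * ?N * (real core_card + ?K)"
  have K: "0 \<le> ?K" and c: "0 \<le> ?c" and M: "0 \<le> ?M"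
    using shell_const_pos inv_bound_pos pack_radius_pos far_radius_nonneg by auto
  show ?thesis
  proof (rule that)
    have "0 \<le> C0" unfolding C0_def using K c M inv_bound_pos by (intro add_nonneg_nonneg mult_nonneg_nonneg) auto
    then show "C0 + 1 > 0" by linarith
    fix l and n :: nat assume "1 \<le> n"
    define r where "r = real n"
    have r: "1 \<le> r" using \<open>1 \<le> n\<close> by (simp add: r_def)
    have pow: "r ^ (?d - 1) \<le> r ^ ?d" "r ^ (?d - 1) * r = r ^ ?d"
      using r power_increasing[of "?d - 1" ?d r] power_minus_mult[of ?d r] by simp_all
    have "r ^ (?d - 1) * (?c * r + 1) = ?c * r ^ ?d + r ^ (?d - 1)"
      using pow(2) by (simp add: algebra_simps)
    also have "\<dots> \<le> (?c + 1) * r ^ ?d" using pow(1) by (simp add: algebra_simps)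
    finally have walk: "?K * r ^ (?d - 1) * (?c * r + 1) \<le> ?K * (?c + 1) * r ^ ?d"
      using K by (simp add: mult.assoc mult_left_mono)
    have core: "real core_card + ?K * r ^ (?d - 1) \<le> (real core_card + ?K) * r ^ ?d"
    proof -
      have "real core_card * 1 \<le> real core_card * r ^ ?d" using r by (intro mult_left_mono) auto
      moreover have "?K * r ^ (?d - 1) \<le> ?K * r ^ ?d" using pow(1) K by (rule mult_left_mono)
      ultimately show ?thesis by (simp add: distrib_right)
    qed
    let ?B = "Bn \<Lambda> (chosen_path Cp) l n"
    note sub = Bn_chosen_path_subset[of Cp l n, folded r_def]
    note G = card_through_pairs[OF r, of l] and B1 = card_near_core_pairs[OF r]
      and B3 = card_blocked_pairs[OF r]
    have fin: "finite (through_pairs l r \<union> near_core_pairs r \<union> prod.swap ` near_core_pairs r \<union> blocked_pairs r)"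
      using G B1 B3 by simp
    have "card ?B \<le> card (through_pairs l r) + card (near_core_pairs r) +
        card (prod.swap ` near_core_pairs r) + card (blocked_pairs r)"
      using card_mono[OF fin sub] card_Un4_le by (rule order.trans)
    moreover have "card (prod.swap ` near_core_pairs r) \<le> card (near_core_pairs r)"
      by (rule card_image_le) (use B1 in simp)
    ultimately have "real (card ?B) \<le> real (card (through_pairs l r)) + 2 * real (card (near_core_pairs r)) +
        real (card (blocked_pairs r))" by linarith
    also have "\<dots> \<le> ?K * r ^ (?d - 1) * (?c * r + 1) + 2 * (?N * (real core_card + ?K * r ^ (?d - 1))) +
        ?K * r ^ (?d - 1) * (?c * r + 1) * ?M"
      using G B1 B3 by (intro add_mono) auto
    also have "\<dots> \<le> ?K * (?c + 1) * r ^ ?d + 2 * (?N * ((real core_card + ?K) * r ^ ?d)) +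
        ?K * (?c + 1) * r ^ ?d * ?M"
      using walk core M by (intro add_mono mult_left_mono mult_right_mono) auto
    also have "\<dots> = C0 * r ^ ?d" by (simp add: C0_def algebra_simps)
    also have "\<dots> \<le> (C0 + 1) * r ^ ?d" using r by simp
    finally show "finite ?B \<and> real (card ?B) \<le> (C0 + 1) * real n ^ ?d"
      using finite_subset[OF sub fin] by (simp add: r_def)
  qed
qed

end

theorem mainTheorem10:
  fixes A :: "real^'n^'n" and \<Lambda> :: "(real^'n) set"
  assumes dim: "CARD('n) = 2 \<or> CARD('n) = 3"
    and inv: "invertible A"
    and vor: "\<And>l i. l \<in> hom_lattice A \<Longrightarrow>
                l + A *v axis i 1 \<in> vor_nbrs (hom_lattice A) l \<and>
                l - A *v axis i 1 \<in> vor_nbrs (hom_lattice A) l"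
    and rc: "RC \<Lambda> A"
  shows "\<exists>(P :: real^'n \<Rightarrow> real^'n \<Rightarrow> (real^'n) list) Cp C. Cp > 0 \<and> C > 0 \<and>
           (\<forall>l1\<in>\<Lambda>. \<forall>l2\<in>\<Lambda>. nn_path \<Lambda> Cp l1 l2 (P l1 l2)) \<and>
           (\<forall>l\<in>\<Lambda>. \<forall>n::nat. n \<ge> 1 \<longrightarrow>
              finite (Bn \<Lambda> P l n) \<and> real (card (Bn \<Lambda> P l n)) \<le> C * real n ^ CARD('n))"
proof -
  obtain R where R: "R > 0" "\<Lambda> - ball 0 R = hom_lattice A - ball 0 R" "finite (\<Lambda> \<inter> ball 0 R)"
    using rc by (auto simp: RC_def)
  interpret defected_lattice A \<Lambda> R
    using inv vor R by unfold_locales auto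
  obtain Cp where Cp: "Cp > 0" "\<And>l1 l2. l1 \<in> \<Lambda> \<Longrightarrow> l2 \<in> \<Lambda> \<Longrightarrow> \<exists>p. nn_path \<Lambda> Cp l1 l2 p"
    using exists_linear_nn_paths by blast
  define Cp' where "Cp' = max Cp (real CARD('n) * inv_bound)"
  have "\<exists>p. nn_path \<Lambda> Cp' l1 l2 p" if "l1 \<in> \<Lambda>" "l2 \<in> \<Lambda>" for l1 l2
    using Cp(2)[OF that] nn_path_mono[of \<Lambda> Cp l1 l2 _ Cp'] by (auto simp: Cp'_def)
  then have "\<forall>l1\<in>\<Lambda>. \<forall>l2\<in>\<Lambda>. nn_path \<Lambda> Cp' l1 l2 (chosen_path Cp' l1 l2)"
    by (auto simp: Cp'_def intro: nn_path_chosen_path)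
  moreover obtain C where "C > 0" "\<And>l n. 1 \<le> n \<Longrightarrow> finite (Bn \<Lambda> (chosen_path Cp') l n) \<and>
      real (card (Bn \<Lambda> (chosen_path Cp') l n)) \<le> C * real n ^ CARD('n)"
    using card_Bn_chosen_path_le by blast
  moreover have "Cp' > 0" using Cp(1) by (simp add: Cp'_def)
  ultimately show ?thesis by blast
qed

end
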